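(* Let $k\ge 1$ and let $n_1,\ldots,n_k\ge 3$ be (not necessarily distinct) integers. Then the direct product $C_{n_1}\times\cdots\times C_{n_k}$ is $\mathbb{Z}_{n_1\cdots n_k}$-distance antimagic if and only if all of $n_1,\ldots,n_k$ are odd. In particular, for every $d\ge 1$ and odd $n\ge 3$, the direct product of $d$ copies of $C_n$ is $\mathbb{Z}_{n^d}$-distance antimagic.
   Context: $C_n$ is the cycle of length $n$. The direct product $G_1\times\cdots\times G_k$ has vertex set $V(G_1)\times\cdots\times V(G_k)$, with $(x_1,\ldots,x_k)$ and $(y_1,\ldots,y_k)$ adjacent iff $x_iy_i\in E(G_i)$ for every $i$. For a graph $G$ with $n$ vertices, a $\mathbb{Z}_n$-distance antimagic labelling is a bijection $f:V(G)\to\mathbb{Z}_n$ such that the weights $w_f(x)=\sum_{y\in N(x)} f(y)$ (mod $n$, $N(x)$ the open neighbourhood) are pairwise distinct; $G$ is $\mathbb{Z}_n$-distance antimagic if such a labelling exists. *)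

theory Defs
  imports Main
begin

definition nbhd :: "'a set \<Rightarrow> ('a \<Rightarrow> 'a \<Rightarrow> bool) \<Rightarrow> 'a \<Rightarrow> 'a set" where
  "nbhd V adj x = {y \<in> V. adj x y}"

text \<open>Z_N-distance antimagic: a bijection f : V \<rightarrow> Z_N (represented as {0..<N})
  whose neighbourhood sums, taken mod N, are pairwise distinct.\<close>
definition Zn_distance_antimagic ::
  "nat \<Rightarrow> 'a set \<Rightarrow> ('a \<Rightarrow> 'a \<Rightarrow> bool) \<Rightarrow> bool" where
  "Zn_distance_antimagic N V adj \<longleftrightarrow>
     (\<exists>f. bij_betw f V {0..<N} \<and>
          inj_on (\<lambda>x. (\<Sum>y\<in>nbhd V adj x. f y) mod N) V)"

definition cycle_verts :: "nat \<Rightarrow> nat set" where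
  "cycle_verts n = {0..<n}"

definition cycle_adj :: "nat \<Rightarrow> nat \<Rightarrow> nat \<Rightarrow> bool" where
  "cycle_adj n a b \<longleftrightarrow> b = (a + 1) mod n \<or> a = (b + 1) mod n"

definition cprod_verts :: "nat list \<Rightarrow> nat list set" where
  "cprod_verts ns = {xs. length xs = length ns \<and>
                         (\<forall>i<length ns. xs ! i \<in> cycle_verts (ns ! i))}"

definition cprod_adj :: "nat list \<Rightarrow> nat list \<Rightarrow> nat list \<Rightarrow> bool" where
  "cprod_adj ns xs ys \<longleftrightarrow> length xs = length ns \<and> length ys = length ns \<and>
                          (\<forall>i<length ns. cycle_adj (ns ! i) (xs ! i) (ys ! i))"

end

theory Submission
  imports Defs "HOL-Number_Theory.Cong"
begin

(* The product C_{n_1} x ... x C_{n_k} has N = n_1 ... n_k vertices, symmetric adjacency,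
   and every vertex has exactly 2^k neighbours.

   Necessity.  In any finite r-regular graph with symmetric adjacency, double counting
   shows that the sum of all weights equals r times the sum of all labels.  If the labels
   and the weights both run through Z_N, both sums are 0 + 1 + ... + (N-1) = N(N-1)/2,
   so N(N-1)/2 = r N(N-1)/2 (mod N); for even r the right-hand side is 0 mod N,
   whereas for even N the left-hand side is not.

   Sufficiency.  Label a vertex (x_1, ..., x_k) by its mixed-radix code
   x_1 + n_1 (x_2 + n_2 (x_3 + ...)), a bijection onto {0..<N}.  Since the neighbourhood
   of x # xs is {x+1, x-1} x N(xs), the weight obeys
     w(x # xs) = 2^(k-1) ((x+1) + (x-1)) + 2 n w(xs),   with (x+1) + (x-1) = 2x (mod n).
   For odd n, the weight mod n therefore determines x, and then the weight mod n P
   determines w(xs) mod P (P the product of the remaining lengths); induction on the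
   list of lengths gives injectivity of the weights mod N. *)

text \<open>Double counting in a regular graph with symmetric adjacency: every label is
  counted once for each of its r neighbours, so the total weight is r times the total label.\<close>

lemma sum_weights_regular:
  fixes f :: "'a \<Rightarrow> nat"
  assumes fin: "finite V"
    and sym: "\<And>x y. x \<in> V \<Longrightarrow> y \<in> V \<Longrightarrow> adj x y \<longleftrightarrow> adj y x"
    and reg: "\<And>x. x \<in> V \<Longrightarrow> card (nbhd V adj x) = r"
  shows "(\<Sum>x\<in>V. \<Sum>y\<in>nbhd V adj x. f y) = r * (\<Sum>y\<in>V. f y)"
proof -
  have "(\<Sum>x\<in>V. \<Sum>y\<in>nbhd V adj x. f y) = (\<Sum>x\<in>V. \<Sum>y\<in>V. if adj x y then f y else 0)"
    unfolding nbhd_def by (simp add: sum.inter_filter[OF fin])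
  also have "\<dots> = (\<Sum>y\<in>V. \<Sum>x\<in>V. if adj x y then f y else 0)"
    by (rule sum.swap)
  also have "\<dots> = (\<Sum>y\<in>V. card (nbhd V adj y) * f y)"
  proof (rule sum.cong[OF refl])
    fix y assume y: "y \<in> V"
    have "(\<Sum>x\<in>V. if adj x y then f y else 0) = (\<Sum>x\<in>V. if adj y x then f y else 0)"
      using sym y by (intro sum.cong) auto
    also have "\<dots> = card (nbhd V adj y) * f y"
      unfolding nbhd_def by (simp add: sum.inter_filter[OF fin, symmetric])
    finally show "(\<Sum>x\<in>V. if adj x y then f y else 0) = card (nbhd V adj y) * f y" .
  qed
  also have "\<dots> = r * (\<Sum>y\<in>V. f y)"
    using reg by (simp add: sum_distrib_left)
  finally show ?thesis .
qed

lemma sum_bij_betw_range: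
  "bij_betw h V {0..<N} \<Longrightarrow> (\<Sum>x\<in>V. h x) = \<Sum>{0..<N}"
  using sum.reindex_bij_betw[of h V "{0..<N}" id] by simp

lemma even_not_dvd_gauss_sum:
  fixes N :: nat
  assumes "even N" "0 < N"
  shows "\<not> N dvd \<Sum>{0..<N}"
proof
  assume dvd: "N dvd \<Sum>{0..<N}"
  obtain m where m: "N = 2 * m" using assms(1) by blast
  have "\<Sum>{0..<N} = m * (2 * m - 1)"
    unfolding Sum_Ico_nat m by simp
  then have "m * 2 dvd m * (2 * m - 1)" using dvd m by (simp add: mult.commute)
  then have "2 dvd 2 * m - 1" using assms(2) m by simp
  then show False using assms(2) m by presburger
qed

text \<open>The parity obstruction: a regular graph of even degree on an even number N of
  vertices is never Z_N-distance antimagic, since its weights would sum to N(N-1)/2 mod N,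
  while double counting forces that sum to be 0 mod N.\<close>

lemma regular_even_order_not_antimagic:
  assumes fin: "finite V"
    and sym: "\<And>x y. x \<in> V \<Longrightarrow> y \<in> V \<Longrightarrow> adj x y \<longleftrightarrow> adj y x"
    and reg: "\<And>x. x \<in> V \<Longrightarrow> card (nbhd V adj x) = r"
    and "even r" "even N" "0 < N"
  shows "\<not> Zn_distance_antimagic N V adj"
proof
  assume "Zn_distance_antimagic N V adj"
  then obtain f where f: "bij_betw f V {0..<N}"
    and inj: "inj_on (\<lambda>x. (\<Sum>y\<in>nbhd V adj x. f y) mod N) V"
    unfolding Zn_distance_antimagic_def by blast
  define w where "w x = (\<Sum>y\<in>nbhd V adj x. f y) mod N" for x
  have inj_w: "inj_on w V" using inj unfolding w_def .
  have "w ` V \<subseteq> {0..<N}" using \<open>0 < N\<close> by (auto simp: w_def)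
  moreover have "card (w ` V) = card {0..<N}"
    using card_image[OF inj_w] bij_betw_same_card[OF f] by simp
  ultimately have "bij_betw w V {0..<N}"
    using inj_w by (simp add: bij_betw_def card_subset_eq)
  then have "\<Sum>{0..<N} mod N = (\<Sum>x\<in>V. w x) mod N"
    by (simp add: sum_bij_betw_range)
  also have "\<dots> = (\<Sum>x\<in>V. \<Sum>y\<in>nbhd V adj x. f y) mod N"
    unfolding w_def by (rule mod_sum_eq)
  also have "\<dots> = (r * \<Sum>{0..<N}) mod N"
    using sum_weights_regular[OF fin sym reg] sum_bij_betw_range[OF f] by simp
  also have "\<dots> = 0"
  proof -
    obtain q where "r = 2 * q" using \<open>even r\<close> by blast
    moreover have "2 * \<Sum>{0..<N} = N * (N - 1)"
      using \<open>even N\<close> by (simp add: Sum_Ico_nat)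
    ultimately have "r * \<Sum>{0..<N} = q * (N - 1) * N"
      by simp
    then show ?thesis by simp
  qed
  finally show False
    using even_not_dvd_gauss_sum[OF \<open>even N\<close> \<open>0 < N\<close>] by auto
qed

definition cyc_succ :: "nat \<Rightarrow> nat \<Rightarrow> nat" where
  "cyc_succ n x = (if x + 1 = n then 0 else x + 1)"

definition cyc_pred :: "nat \<Rightarrow> nat \<Rightarrow> nat" where
  "cyc_pred n x = (if x = 0 then n - 1 else x - 1)"

lemma cycle_nbhd:
  assumes "3 \<le> n" "x < n"
  shows "nbhd (cycle_verts n) (cycle_adj n) x = {cyc_succ n x, cyc_pred n x}"
proof -
  have succ: "(a + 1) mod n = cyc_succ n a" if "a < n" for a
    using that by (auto simp: cyc_succ_def)
  have bounds: "cyc_succ n x < n" "cyc_pred n x < n"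
    using assms by (auto simp: cyc_succ_def cyc_pred_def)
  have adj_iff: "cycle_adj n x y \<longleftrightarrow> y = cyc_succ n x \<or> y = cyc_pred n x" if "y < n" for y
    unfolding cycle_adj_def succ[OF assms(2)] succ[OF that]
    using assms that by (auto simp: cyc_succ_def cyc_pred_def)
  show ?thesis
  proof (intro set_eqI iffI)
    fix y assume "y \<in> nbhd (cycle_verts n) (cycle_adj n) x"
    then show "y \<in> {cyc_succ n x, cyc_pred n x}"
      using adj_iff by (auto simp: nbhd_def cycle_verts_def)
  next
    fix y assume "y \<in> {cyc_succ n x, cyc_pred n x}"
    then show "y \<in> nbhd (cycle_verts n) (cycle_adj n) x"
      using adj_iff bounds by (auto simp: nbhd_def cycle_verts_def)
  qed
qed

lemma cyc_succ_neq_pred: "3 \<le> n \<Longrightarrow> x < n \<Longrightarrow> cyc_succ n x \<noteq> cyc_pred n x"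
  by (auto simp: cyc_succ_def cyc_pred_def)

lemma cyc_succ_plus_pred: "x < n \<Longrightarrow> [cyc_succ n x + cyc_pred n x = 2 * x] (mod n)"
proof -
  assume "x < n"
  consider "x = 0" | "x \<noteq> 0" "x + 1 = n" | "x \<noteq> 0" "x + 1 \<noteq> n" by blast
  then show ?thesis
  proof cases
    case 1
    then show ?thesis using \<open>x < n\<close> by (simp add: cyc_succ_def cyc_pred_def cong_def)
  next
    case 2
    then have "cyc_succ n x + cyc_pred n x + n = 2 * x"
      by (auto simp: cyc_succ_def cyc_pred_def)
    then show ?thesis
      unfolding cong_def by (metis mod_add_self2)
  next
    case 3
    then show ?thesis by (simp add: cyc_succ_def cyc_pred_def mult_2)
  qed
qed

abbreviation prod_nbhd :: "nat list \<Rightarrow> nat list \<Rightarrow> nat list set" where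
  "prod_nbhd ns xs \<equiv> nbhd (cprod_verts ns) (cprod_adj ns) xs"

lemma cprod_verts_Nil: "cprod_verts [] = {[]}"
  by (auto simp: cprod_verts_def)

lemma cprod_verts_Cons:
  "cprod_verts (n # ns) = (\<lambda>(x, xs). x # xs) ` (cycle_verts n \<times> cprod_verts ns)"
proof (intro set_eqI iffI)
  fix v assume v: "v \<in> cprod_verts (n # ns)"
  then obtain x xs where v_eq: "v = x # xs" by (cases v) (auto simp: cprod_verts_def)
  have "x \<in> cycle_verts n" using v v_eq by (force simp: cprod_verts_def)
  moreover have "xs ! i \<in> cycle_verts (ns ! i)" if "i < length ns" for i
    using v v_eq that unfolding cprod_verts_def by fastforce
  ultimately show "v \<in> (\<lambda>(x, xs). x # xs) ` (cycle_verts n \<times> cprod_verts ns)"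
    using v v_eq by (force simp: cprod_verts_def)
next
  fix v assume "v \<in> (\<lambda>(x, xs). x # xs) ` (cycle_verts n \<times> cprod_verts ns)"
  then show "v \<in> cprod_verts (n # ns)"
    by (auto simp: cprod_verts_def nth_Cons split: nat.splits)
qed

lemma cprod_adj_Cons:
  "cprod_adj (n # ns) (x # xs) (y # ys) \<longleftrightarrow> cycle_adj n x y \<and> cprod_adj ns xs ys"
  unfolding cprod_adj_def by (auto simp: less_Suc_eq_0_disj nth_Cons split: nat.splits)

lemma cprod_adj_sym: "cprod_adj ns xs ys \<longleftrightarrow> cprod_adj ns ys xs"
  unfolding cprod_adj_def cycle_adj_def by auto

lemma finite_cprod_verts: "finite (cprod_verts ns)"
  by (induction ns) (auto simp: cprod_verts_Nil cprod_verts_Cons cycle_verts_def)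

lemma inj_on_Cons: "inj_on (\<lambda>(x, xs). x # xs) A"
  by (auto simp: inj_on_def)

lemma prod_nbhd_Cons:
  "prod_nbhd (n # ns) (x # xs) =
     (\<lambda>(y, ys). y # ys) ` (nbhd (cycle_verts n) (cycle_adj n) x \<times> prod_nbhd ns xs)"
  unfolding nbhd_def cprod_verts_Cons by (auto simp: cprod_adj_Cons)

lemma card_prod_nbhd:
  "\<forall>n\<in>set ns. 3 \<le> n \<Longrightarrow> xs \<in> cprod_verts ns \<Longrightarrow> card (prod_nbhd ns xs) = 2 ^ length ns"
proof (induction ns arbitrary: xs)
  case Nil
  then show ?case by (simp add: cprod_verts_Nil nbhd_def cprod_adj_def)
next
  case (Cons n ns)
  then obtain x xs' where xs: "xs = x # xs'" "x < n" "xs' \<in> cprod_verts ns"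
    by (auto simp: cprod_verts_Cons cycle_verts_def)
  have n3: "3 \<le> n" using Cons.prems by simp
  have "card (prod_nbhd (n # ns) xs) = card ({cyc_succ n x, cyc_pred n x} \<times> prod_nbhd ns xs')"
    unfolding xs prod_nbhd_Cons cycle_nbhd[OF n3 xs(2)] by (rule card_image[OF inj_on_Cons])
  also have "\<dots> = 2 * 2 ^ length ns"
    using Cons xs cyc_succ_neq_pred[OF n3 xs(2)] by (simp add: card_cartesian_product)
  finally show ?case by simp
qed

fun radix_code :: "nat list \<Rightarrow> nat list \<Rightarrow> nat" where
  "radix_code (n # ns) (x # xs) = x + n * radix_code ns xs"
| "radix_code _ _ = 0"

lemma bij_digit_pair:
  "bij_betw (\<lambda>(x, m). x + n * m) ({0..<n} \<times> {0..<P}) {0..<n * P}" for n P :: nat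
proof (rule bij_betw_byWitness[where f' = "\<lambda>z. (z mod n, z div n)"])
  have "x + n * m < n * P" if "x < n" "m < P" for x m
  proof -
    have "x + n * m < n * (m + 1)" using that by simp
    also have "\<dots> \<le> n * P" using that by (intro mult_le_mono2) simp
    finally show ?thesis .
  qed
  then show "(\<lambda>(x, m). x + n * m) ` ({0..<n} \<times> {0..<P}) \<subseteq> {0..<n * P}"
    by auto
  have "z mod n < n \<and> z div n < P" if "z < n * P" for z
  proof -
    have "0 < n" using that by (cases n) auto
    then show ?thesis using that by (simp add: less_mult_imp_div_less mult.commute)
  qed
  then show "(\<lambda>z. (z mod n, z div n)) ` {0..<n * P} \<subseteq> {0..<n} \<times> {0..<P}"
    by auto
qed auto

lemma bij_radix_code: "bij_betw (radix_code ns) (cprod_verts ns) {0..<prod_list ns}"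
proof (induction ns)
  case Nil
  then show ?case by (simp add: cprod_verts_Nil bij_betw_def)
next
  case (Cons n ns)
  have cons: "bij_betw (\<lambda>(x, xs). x # xs) (cycle_verts n \<times> cprod_verts ns) (cprod_verts (n # ns))"
    by (simp add: bij_betw_def inj_on_Cons cprod_verts_Cons)
  have "bij_betw ((\<lambda>(x, m). x + n * m) \<circ> map_prod id (radix_code ns))
          (cycle_verts n \<times> cprod_verts ns) {0..<n * prod_list ns}"
    unfolding cycle_verts_def
    by (rule bij_betw_trans[OF bij_betw_map_prod[OF bij_betw_id Cons.IH] bij_digit_pair])
  moreover have "(\<lambda>(x, m). x + n * m) \<circ> map_prod id (radix_code ns)
                 = radix_code (n # ns) \<circ> (\<lambda>(x, xs). x # xs)"
    by auto
  ultimately have "bij_betw (radix_code (n # ns) \<circ> (\<lambda>(x, xs). x # xs))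
                     (cycle_verts n \<times> cprod_verts ns) {0..<prod_list (n # ns)}"
    by simp
  then show ?case
    using bij_betw_comp_iff[OF cons] by blast
qed

definition code_weight :: "nat list \<Rightarrow> nat list \<Rightarrow> nat" where
  "code_weight ns xs = (\<Sum>zs\<in>prod_nbhd ns xs. radix_code ns zs)"

text \<open>The weight recurrence: the first coordinate contributes its neighbour sum once
  for each of the 2^(k-1) neighbours of the tail, and the tail contributes its weight
  twice, scaled by n.\<close>

lemma code_weight_Cons:
  assumes "\<forall>n\<in>set (n # ns). 3 \<le> n" "x < n" "xs \<in> cprod_verts ns"
  shows "code_weight (n # ns) (x # xs) =
           2 ^ length ns * (cyc_succ n x + cyc_pred n x) + n * (2 * code_weight ns xs)"
proof -
  let ?C = "{cyc_succ n x, cyc_pred n x}" and ?B = "prod_nbhd ns xs"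
  have n3: "3 \<le> n" using assms(1) by simp
  have card_B: "card ?B = 2 ^ length ns" using assms card_prod_nbhd by simp
  have "code_weight (n # ns) (x # xs) = sum (radix_code (n # ns)) ((\<lambda>(y, ys). y # ys) ` (?C \<times> ?B))"
    unfolding code_weight_def prod_nbhd_Cons cycle_nbhd[OF n3 assms(2)] ..
  also have "\<dots> = (\<Sum>(y, ys)\<in>?C \<times> ?B. y + n * radix_code ns ys)"
    by (subst sum.reindex[OF inj_on_Cons]) (simp add: case_prod_beta')
  also have "\<dots> = (\<Sum>y\<in>?C. \<Sum>ys\<in>?B. y + n * radix_code ns ys)"
    by (rule sum.cartesian_product[symmetric])
  also have "\<dots> = (\<Sum>y\<in>?C. card ?B * y + n * code_weight ns xs)"
    by (simp add: sum.distrib sum_distrib_left code_weight_def)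
  also have "\<dots> = 2 ^ length ns * (cyc_succ n x + cyc_pred n x) + n * (2 * code_weight ns xs)"
    using cyc_succ_neq_pred[OF n3 assms(2)] card_B by (simp add: algebra_simps)
  finally show ?thesis .
qed

lemma cong_mult_common_factor:
  "0 < n \<Longrightarrow> [n * a = n * b] (mod n * m) \<longleftrightarrow> [a = b] (mod m)" for n a b m :: nat
  by (simp add: cong_def mod_mult_mult1)

lemma odd_prod_list: "\<forall>n\<in>set ns. odd n \<Longrightarrow> odd (prod_list ns)" for ns :: "nat list"
  by (induction ns) auto

lemma code_weight_inj_mod:
  assumes "\<forall>n\<in>set ns. 3 \<le> n \<and> odd n" "xs \<in> cprod_verts ns" "ys \<in> cprod_verts ns"
    and "[code_weight ns xs = code_weight ns ys] (mod prod_list ns)"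
  shows "xs = ys"
  using assms
proof (induction ns arbitrary: xs ys)
  case Nil
  then show ?case by (simp add: cprod_verts_Nil)
next
  case (Cons n ns)
  obtain x xs' where xs: "xs = x # xs'" "x < n" "xs' \<in> cprod_verts ns"
    using Cons.prems(2) by (auto simp: cprod_verts_Cons cycle_verts_def)
  obtain y ys' where ys: "ys = y # ys'" "y < n" "ys' \<in> cprod_verts ns"
    using Cons.prems(3) by (auto simp: cprod_verts_Cons cycle_verts_def)
  have "odd n" and ge3: "\<forall>n\<in>set (n # ns). 3 \<le> n" using Cons.prems(1) by auto
  define c where "c = (2::nat) ^ length ns"
  have coprime_c: "coprime c n" using \<open>odd n\<close> by (simp add: c_def)
  let ?t = "\<lambda>z. cyc_succ n z + cyc_pred n z"
  have weights: "[c * ?t x + n * (2 * code_weight ns xs') = c * ?t y + n * (2 * code_weight ns ys')]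
                   (mod n * prod_list ns)"
    using Cons.prems(4) unfolding xs(1) ys(1) c_def
    by (simp add: code_weight_Cons[OF ge3 xs(2,3)] code_weight_Cons[OF ge3 ys(2,3)])
  (* Reducing mod n kills the second summand and determines the first coordinate. *)
  have "[c * ?t x = c * ?t y] (mod n)"
    using cong_modulus_mult_nat[OF weights] by (simp add: cong_def)
  then have "[?t x = ?t y] (mod n)"
    using cong_mult_lcancel_nat[OF coprime_c] by blast
  then have "[2 * x = 2 * y] (mod n)"
    using cyc_succ_plus_pred[OF xs(2)] cyc_succ_plus_pred[OF ys(2)]
    by (meson cong_sym cong_trans)
  then have "[x = y] (mod n)"
    using \<open>odd n\<close> by (simp add: cong_mult_lcancel_nat)
  then have "x = y"
    using xs(2) ys(2) by (simp add: cong_less_imp_eq_nat)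
  then have "[n * (2 * code_weight ns xs') = n * (2 * code_weight ns ys')] (mod n * prod_list ns)"
    using weights by (simp add: cong_add_lcancel_nat)
  then have "[2 * code_weight ns xs' = 2 * code_weight ns ys'] (mod prod_list ns)"
    using ge3 by (simp add: cong_mult_common_factor)
  moreover have "coprime 2 (prod_list ns)"
    using Cons.prems(1) odd_prod_list[of ns] by simp
  ultimately have "[code_weight ns xs' = code_weight ns ys'] (mod prod_list ns)"
    using cong_mult_lcancel_nat by blast
  then have "xs' = ys'"
    using Cons.IH Cons.prems(1) xs(3) ys(3) by simp
  then show ?case
    using xs(1) ys(1) \<open>x = y\<close> by simp
qed

lemma odd_cycles_antimagic:
  assumes "\<forall>n\<in>set ns. 3 \<le> n \<and> odd n"
  shows "Zn_distance_antimagic (prod_list ns) (cprod_verts ns) (cprod_adj ns)"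
  unfolding Zn_distance_antimagic_def
proof (intro exI conjI)
  show "bij_betw (radix_code ns) (cprod_verts ns) {0..<prod_list ns}"
    by (rule bij_radix_code)
  show "inj_on (\<lambda>xs. (\<Sum>y\<in>prod_nbhd ns xs. radix_code ns y) mod prod_list ns) (cprod_verts ns)"
    using code_weight_inj_mod[OF assms] by (intro inj_onI) (simp add: code_weight_def cong_def)
qed

lemma even_cycle_not_antimagic:
  assumes "ns \<noteq> []" "\<forall>n\<in>set ns. 3 \<le> n" "m \<in> set ns" "even m"
  shows "\<not> Zn_distance_antimagic (prod_list ns) (cprod_verts ns) (cprod_adj ns)"
proof (rule regular_even_order_not_antimagic)
  show "finite (cprod_verts ns)" by (rule finite_cprod_verts)
  show "cprod_adj ns x y \<longleftrightarrow> cprod_adj ns y x" for x y by (rule cprod_adj_sym)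
  show "card (prod_nbhd ns xs) = 2 ^ length ns" if "xs \<in> cprod_verts ns" for xs
    using card_prod_nbhd assms(2) that by blast
  show "even ((2::nat) ^ length ns)" using assms(1) by simp
  show "even (prod_list ns)"
    using assms(3,4) by (metis prod_list_dvd dvd_trans)
  show "0 < prod_list ns"
    using assms(2) by (induction ns) auto
qed

theorem mainTheorem15:
  shows "(\<forall>ns::nat list. ns \<noteq> [] \<longrightarrow> (\<forall>n\<in>set ns. n \<ge> 3) \<longrightarrow>
            (Zn_distance_antimagic (prod_list ns) (cprod_verts ns) (cprod_adj ns)
             \<longleftrightarrow> (\<forall>n\<in>set ns. odd n)))
       \<and> (\<forall>(d::nat) (n::nat). d \<ge> 1 \<longrightarrow> odd n \<longrightarrow> n \<ge> 3 \<longrightarrow>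
            Zn_distance_antimagic (n ^ d) (cprod_verts (replicate d n))
              (cprod_adj (replicate d n)))"
proof (intro conjI allI impI)
  fix ns :: "nat list" assume "ns \<noteq> []" and ge3: "\<forall>n\<in>set ns. n \<ge> 3"
  show "Zn_distance_antimagic (prod_list ns) (cprod_verts ns) (cprod_adj ns)
          \<longleftrightarrow> (\<forall>n\<in>set ns. odd n)"
    using odd_cycles_antimagic even_cycle_not_antimagic[OF \<open>ns \<noteq> []\<close> ge3] ge3 by blast
next
  fix d n :: nat assume "odd n" "n \<ge> 3"
  then have "Zn_distance_antimagic (prod_list (replicate d n))
               (cprod_verts (replicate d n)) (cprod_adj (replicate d n))"
    by (intro odd_cycles_antimagic) simp
  then show "Zn_distance_antimagic (n ^ d) (cprod_verts (replicate d n)) (cprod_adj (replicate d n))"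
    by (simp add: prod_list_replicate)
qed

end
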